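(* Let $K_1,\dots,K_m\subset\mathbb{R}^n$ be closed sets, each having the SOSH property at $\bar x\in K:=\bigcap_{l=1}^mK_l$, and suppose $\{K_l\}_{l=1}^m$ has linearly regular intersection at $\bar x$. Then $K$ has the SOSH property at $\bar x$.
   Context: For a closed set $C\subset\mathbb{R}^n$ and $\bar x\in C$, the regular normal cone is $\hat N_C(\bar x)=\{y:\langle y,x-\bar x\rangle\le o(\|x-\bar x\|)\text{ for all }x\in C\}$ and the limiting normal cone $N_C(\bar x)$ is the set of $y$ for which there exist $x_i\to\bar x$ with $x_i\in C$ and $y_i\in\hat N_C(x_i)$ with $y_i\to y$. A closed set $C$ has the SOSH property at $\bar x\in C$ if there exist $\delta>0$, $M>0$ such that $\langle v,x-\bar x\rangle\le M\|\bar x-x\|^2$ for all $x\in(\mathbb{B}(\bar x,\delta)\cap C)\setminus\{\bar x\}$ and all $v\in N_C(x)$ with $\|v\|=1$. Closed sets $K_1,\dots,K_m$ have linearly regular intersection at $x\in\bigcap_lK_l$ if $\sum_l v_l=0$ with $v_l\in N_{K_l}(x)$ implies $v_l=0$ for all $l$. *)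

theory Defs
  imports "HOL-Analysis.Analysis"
begin

definition regular_normal_cone :: "'a::euclidean_space set \<Rightarrow> 'a \<Rightarrow> 'a set" where
  "regular_normal_cone C xb = {y. xb \<in> C \<and>
     (\<forall>e>0. \<exists>d>0. \<forall>x\<in>C. norm (x - xb) < d \<longrightarrow> inner y (x - xb) \<le> e * norm (x - xb))}"

definition limiting_normal_cone :: "'a::euclidean_space set \<Rightarrow> 'a \<Rightarrow> 'a set" where
  "limiting_normal_cone C xb = {y. \<exists>xs ys. (\<forall>i. xs i \<in> C) \<and> xs \<longlonglongrightarrow> xb \<and>
     (\<forall>i. ys i \<in> regular_normal_cone C (xs i)) \<and> ys \<longlonglongrightarrow> y}"

definition SOSH :: "'a::euclidean_space set \<Rightarrow> 'a \<Rightarrow> bool" where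
  "SOSH C xb \<longleftrightarrow> (\<exists>d>0. \<exists>M>0. \<forall>x \<in> (cball xb d \<inter> C) - {xb}.
     \<forall>v \<in> limiting_normal_cone C x. norm v = 1 \<longrightarrow> inner v (x - xb) \<le> M * (norm (xb - x))\<^sup>2)"

definition linearly_regular_intersection ::
  "nat \<Rightarrow> (nat \<Rightarrow> 'a::euclidean_space set) \<Rightarrow> 'a \<Rightarrow> bool" where
  "linearly_regular_intersection m K x \<longleftrightarrow>
     (\<forall>v. (\<forall>l\<in>{1..m}. v l \<in> limiting_normal_cone (K l) x) \<and> (\<Sum>l=1..m. v l) = 0
        \<longrightarrow> (\<forall>l\<in>{1..m}. v l = 0))"

end

theory Submission
  imports Defs
begin

text \<open>
  SOSH at \<open>xb\<close> amounts to the homogeneous estimate \<open>\<langle>w, y - xb\<rangle> \<le> M \<parallel>w\<parallel> \<parallel>y - xb\<parallel>\<^sup>2\<close> for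
  regular normals \<open>w\<close> at points \<open>y\<close> near \<open>xb\<close>, because this estimate passes to limiting normals.
  A unit regular normal \<open>v\<close> of the intersection at \<open>x\<close> is approximately a sum of regular normals
  \<open>w\<^sub>l\<close> of the \<open>K\<^sub>l\<close> at points \<open>y\<^sub>l\<close> close to \<open>x\<close>: minimize the exact penalty
  \<open>c \<parallel>z - x\<parallel>\<^sup>2 - \<langle>v, z - x\<rangle> + k \<Sum>\<^sub>l dist(z, K\<^sub>l \<inter> cball x \<delta>)\<^sup>2\<close> and compute its gradient at the
  minimizer, where the distances are attained at the \<open>y\<^sub>l\<close>. Linear regularity gives
  \<open>\<Sum>\<^sub>l \<parallel>w\<^sub>l\<parallel> \<le> C \<parallel>\<Sum>\<^sub>l w\<^sub>l\<parallel>\<close> uniformly near \<open>xb\<close>, so adding up the SOSH estimates of the \<open>K\<^sub>l\<close>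
  bounds \<open>\<langle>v, x - xb\<rangle>\<close> by \<open>2 C M \<parallel>x - xb\<parallel>\<^sup>2\<close> up to an error that vanishes as the
  approximation is refined.
\<close>

lemma regular_normal_cone_memD: "y \<in> regular_normal_cone C p \<Longrightarrow> p \<in> C"
  by (simp add: regular_normal_cone_def)

lemma regular_normal_cone_scaleR:
  assumes "y \<in> regular_normal_cone C p" "t \<ge> 0"
  shows "t *\<^sub>R y \<in> regular_normal_cone C p"
proof (cases "t = 0")
  case True
  then show ?thesis
    using regular_normal_cone_memD[OF assms(1)] by (auto simp: regular_normal_cone_def)
next
  case False
  then have t: "t > 0" using assms(2) by simp
  have regular: "\<exists>d>0. \<forall>x\<in>C. norm (x - p) < d \<longrightarrow> inner y (x - p) \<le> e * norm (x - p)"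
    if "e > 0" for e
    using assms(1) that by (simp add: regular_normal_cone_def)
  have "\<exists>d>0. \<forall>x\<in>C. norm (x - p) < d \<longrightarrow> inner (t *\<^sub>R y) (x - p) \<le> e * norm (x - p)"
    if "e > 0" for e
  proof -
    obtain d where "d > 0" "\<forall>x\<in>C. norm (x - p) < d \<longrightarrow> inner y (x - p) \<le> e / t * norm (x - p)"
      using regular[of "e / t"] \<open>e > 0\<close> t by auto
    moreover have "inner (t *\<^sub>R y) (x - p) \<le> e * norm (x - p)"
      if "inner y (x - p) \<le> e / t * norm (x - p)" for x
      using mult_left_mono[OF that, of t] t by simp
    ultimately show ?thesis by blast
  qed
  then show ?thesis
    using assms(1) by (simp add: regular_normal_cone_def)
qed

lemma regular_normal_cone_subset_limiting:
  "regular_normal_cone C p \<subseteq> limiting_normal_cone C p"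
proof
  fix y assume "y \<in> regular_normal_cone C p"
  then show "y \<in> limiting_normal_cone C p"
    using regular_normal_cone_memD[of y C p] unfolding limiting_normal_cone_def
    by (intro CollectI exI[of _ "\<lambda>i. p"] exI[of _ "\<lambda>i. y"]) auto
qed

lemma proximal_normal_in_regular_normal_cone:
  fixes z p :: "'a::euclidean_space"
  assumes "p \<in> A" "r > 0" "t \<ge> 0"
    and nearest: "\<And>y. y \<in> A \<Longrightarrow> norm (y - p) < r \<Longrightarrow> dist z p \<le> dist z y"
  shows "t *\<^sub>R (z - p) \<in> regular_normal_cone A p"
proof -
  have proximal: "2 * inner (z - p) (y - p) \<le> (norm (y - p))\<^sup>2"
    if "y \<in> A" "norm (y - p) < r" for y
  proof -
    have "(norm (z - p))\<^sup>2 \<le> (norm ((z - p) - (y - p)))\<^sup>2"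
      using nearest[OF that] by (simp add: dist_norm power_mono)
    then show ?thesis
      by (simp add: power2_norm_eq_inner inner_diff_left inner_diff_right inner_commute)
  qed
  have "\<exists>d>0. \<forall>y\<in>A. norm (y - p) < d \<longrightarrow> inner (z - p) (y - p) \<le> e * norm (y - p)"
    if "e > 0" for e
  proof (intro exI[of _ "min r (2 * e)"] conjI ballI impI)
    fix y assume "y \<in> A" "norm (y - p) < min r (2 * e)"
    then have "2 * inner (z - p) (y - p) \<le> norm (y - p) * norm (y - p)"
      using proximal by (simp add: power2_eq_square)
    also have "\<dots> \<le> (2 * e) * norm (y - p)"
      using \<open>norm (y - p) < min r (2 * e)\<close> by (intro mult_right_mono) auto
    finally show "inner (z - p) (y - p) \<le> e * norm (y - p)"
      by simp
  qed (use \<open>r > 0\<close> that in auto)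
  then have "z - p \<in> regular_normal_cone A p"
    using \<open>p \<in> A\<close> by (simp add: regular_normal_cone_def)
  then show ?thesis
    using \<open>t \<ge> 0\<close> by (rule regular_normal_cone_scaleR)
qed

lemma gradient_eq_0_at_min_of_quadratic:
  fixes f :: "'a::real_inner \<Rightarrow> real"
  assumes expansion: "\<And>h. f (z + h) = f z + inner G h + A * (norm h)\<^sup>2"
    and min: "\<And>h. f z \<le> f (z + h)"
  shows "G = 0"
proof -
  define t where "t = 1 / (\<bar>A\<bar> + 1)"
  have t: "t > 0" "A * t < 1"
    by (auto simp: t_def field_simps)
  have "0 \<le> inner G ((- t) *\<^sub>R G) + A * (norm ((- t) *\<^sub>R G))\<^sup>2"
    using min[of "(- t) *\<^sub>R G"] expansion[of "(- t) *\<^sub>R G"] by simp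
  also have "\<dots> = - t * (norm G)\<^sup>2 + A * (t\<^sup>2 * (norm G)\<^sup>2)"
    by (simp add: power2_norm_eq_inner power_mult_distrib)
  also have "\<dots> = t * (norm G)\<^sup>2 * (A * t - 1)"
    by (simp add: power2_eq_square algebra_simps)
  finally have "(norm G)\<^sup>2 \<le> 0"
    using t by (simp add: zero_le_mult_iff mult_le_0_iff)
  then show ?thesis by simp
qed

lemma exact_penalty_on_compact:
  fixes \<phi> \<psi> :: "'a::topological_space \<Rightarrow> real"
  assumes "compact A" "continuous_on A \<phi>" "continuous_on A \<psi>"
    and "\<And>z. z \<in> A \<Longrightarrow> 0 \<le> \<psi> z" "\<And>z. z \<in> A \<Longrightarrow> \<psi> z = 0 \<Longrightarrow> 0 < \<phi> z"
  obtains k where "k > 0" "\<And>z. z \<in> A \<Longrightarrow> 0 < \<phi> z + k * \<psi> z"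
proof (cases "A = {}")
  case True
  then show ?thesis using that[of 1] by simp
next
  case False
  obtain z\<^sub>0 where "z\<^sub>0 \<in> A" and z\<^sub>0: "\<And>z. z \<in> A \<Longrightarrow> max (\<phi> z\<^sub>0) (\<psi> z\<^sub>0) \<le> max (\<phi> z) (\<psi> z)"
    using continuous_attains_inf[OF assms(1) False continuous_on_max[OF assms(2,3)]] by blast
  define \<mu> where "\<mu> = max (\<phi> z\<^sub>0) (\<psi> z\<^sub>0)"
  have "\<mu> > 0"
    using assms(4,5)[OF \<open>z\<^sub>0 \<in> A\<close>] by (fastforce simp: \<mu>_def)
  obtain z\<^sub>1 where "z\<^sub>1 \<in> A" and z\<^sub>1: "\<And>z. z \<in> A \<Longrightarrow> \<phi> z\<^sub>1 \<le> \<phi> z"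
    using continuous_attains_inf[OF assms(1) False assms(2)] by blast
  define k where "k = (\<bar>\<phi> z\<^sub>1\<bar> + 1) / \<mu>"
  show ?thesis
  proof (rule that)
    show "k > 0" using \<open>\<mu> > 0\<close> by (simp add: k_def)
    fix z assume "z \<in> A"
    show "0 < \<phi> z + k * \<psi> z"
    proof (cases "\<mu> \<le> \<phi> z")
      case True
      have "0 \<le> k * \<psi> z"
        using \<open>k > 0\<close> assms(4)[OF \<open>z \<in> A\<close>] by simp
      then show ?thesis
        using True \<open>\<mu> > 0\<close> by linarith
    next
      case False
      moreover have "\<mu> \<le> max (\<phi> z) (\<psi> z)"
        using z\<^sub>0[OF \<open>z \<in> A\<close>] by (simp add: \<mu>_def)
      ultimately have "\<mu> \<le> \<psi> z"
        by (simp add: le_max_iff_disj)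
      have "\<bar>\<phi> z\<^sub>1\<bar> + 1 = k * \<mu>"
        using \<open>\<mu> > 0\<close> by (simp add: k_def)
      also have "\<dots> \<le> k * \<psi> z"
        using \<open>\<mu> \<le> \<psi> z\<close> \<open>k > 0\<close> by simp
      finally have "\<bar>\<phi> z\<^sub>1\<bar> + 1 \<le> k * \<psi> z" .
      then show ?thesis
        using z\<^sub>1[OF \<open>z \<in> A\<close>] by linarith
    qed
  qed
qed

lemma continuous_attains_global_min:
  fixes f :: "'a::heine_borel \<Rightarrow> real"
  assumes "continuous_on UNIV f" and far: "\<And>z. r < dist a z \<Longrightarrow> f a \<le> f z"
  shows "\<exists>z. \<forall>z'. f z \<le> f z'"
proof -
  have "continuous_on (cball a \<bar>r\<bar>) f" "cball a \<bar>r\<bar> \<noteq> {}"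
    using continuous_on_subset[OF assms(1)] by auto
  then obtain z where z: "\<And>z'. z' \<in> cball a \<bar>r\<bar> \<Longrightarrow> f z \<le> f z'"
    using continuous_attains_inf[OF compact_cball] by blast
  have "f z \<le> f z'" for z'
  proof (cases "z' \<in> cball a \<bar>r\<bar>")
    case False
    then have "r < dist a z'"
      using abs_ge_self[of r] by (simp add: mem_cball)
    then show ?thesis
      using z[of a] far[of z'] by simp
  qed (use z in simp)
  then show ?thesis by blast
qed

lemma penalty_minimizer_decomposition:
  fixes x v z :: "'a::euclidean_space" and y :: "'i \<Rightarrow> 'a" and S :: "'i \<Rightarrow> 'a set"
  assumes "finite I" "k \<ge> 0"
    and nearest: "\<And>l. l \<in> I \<Longrightarrow> y l \<in> S l" "\<And>l. l \<in> I \<Longrightarrow> infdist z (S l) = dist z (y l)"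
    and min: "\<And>z'. c * (norm (z - x))\<^sup>2 - inner v (z - x) + k * (\<Sum>l\<in>I. (infdist z (S l))\<^sup>2)
                \<le> c * (norm (z' - x))\<^sup>2 - inner v (z' - x) + k * (\<Sum>l\<in>I. (infdist z' (S l))\<^sup>2)"
  shows "v = (2 * c) *\<^sub>R (z - x) + (\<Sum>l\<in>I. (2 * k) *\<^sub>R (z - y l))"
proof -
  \<comment> \<open>The squared distances are majorized by the squared distances to the fixed nearest points,
    with equality at \<open>z\<close>, so \<open>z\<close> also minimizes the resulting quadratic.\<close>
  define g where "g z' = c * (norm (z' - x))\<^sup>2 - inner v (z' - x) + k * (\<Sum>l\<in>I. (norm (z' - y l))\<^sup>2)"
    for z'
  have min_g: "g z \<le> g z'" for z'
  proof -
    have "infdist z' (S l) \<le> norm (z' - y l)" if "l \<in> I" for l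
      using infdist_le[OF nearest(1)[OF that], of z'] by (simp add: dist_norm)
    then have "(\<Sum>l\<in>I. (infdist z' (S l))\<^sup>2) \<le> (\<Sum>l\<in>I. (norm (z' - y l))\<^sup>2)"
      by (intro sum_mono power_mono) (auto simp: infdist_nonneg)
    then have "c * (norm (z' - x))\<^sup>2 - inner v (z' - x) + k * (\<Sum>l\<in>I. (infdist z' (S l))\<^sup>2) \<le> g z'"
      using \<open>k \<ge> 0\<close> by (simp add: g_def mult_left_mono)
    moreover have "g z = c * (norm (z - x))\<^sup>2 - inner v (z - x) + k * (\<Sum>l\<in>I. (infdist z (S l))\<^sup>2)"
      using nearest(2) by (simp add: g_def dist_norm)
    ultimately show ?thesis
      using min[of z'] by linarith
  qed
  define G where "G = (2 * c) *\<^sub>R (z - x) + (2 * k) *\<^sub>R (\<Sum>l\<in>I. z - y l) - v"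
  have expansion: "g (z + h) = g z + inner G h + (c + k * card I) * (norm h)\<^sup>2" for h
  proof -
    have sq: "(norm (z + h - q))\<^sup>2 = (norm (z - q))\<^sup>2 + 2 * inner (z - q) h + (norm h)\<^sup>2" for q
      using dot_norm[of "z - q" h] by (simp add: algebra_simps)
    have sum_sq: "(\<Sum>l\<in>I. (norm (z + h - y l))\<^sup>2)
        = (\<Sum>l\<in>I. (norm (z - y l))\<^sup>2) + 2 * inner (\<Sum>l\<in>I. z - y l) h + card I * (norm h)\<^sup>2"
      unfolding sq by (simp add: sum.distrib inner_sum_left sum_distrib_left)
    have "inner v (z + h - x) = inner v (z - x) + inner v h"
      by (simp add: inner_diff_right inner_add_right)
    then show ?thesis
      unfolding g_def sum_sq unfolding sq by (simp add: G_def inner_add_left inner_diff_left algebra_simps)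
  qed
  have "G = 0"
    using expansion min_g by (rule gradient_eq_0_at_min_of_quadratic)
  then show ?thesis
    by (simp add: G_def scaleR_sum_right)
qed

lemma quadratic_penalty_global_min:
  fixes x v :: "'a::euclidean_space" and P :: "'a \<Rightarrow> real"
  assumes "continuous_on UNIV P" "\<And>z. 0 \<le> P z" "P x = 0" "norm v \<le> 1" "c > 0"
  obtains z where "norm (z - x) \<le> 1 / c" "c * (norm (z - x))\<^sup>2 - inner v (z - x) + P z \<le> 0"
    "\<And>z'. c * (norm (z - x))\<^sup>2 - inner v (z - x) + P z \<le> c * (norm (z' - x))\<^sup>2 - inner v (z' - x) + P z'"
proof -
  define F where "F z = c * (norm (z - x))\<^sup>2 - inner v (z - x) + P z" for z
  have inner_le: "inner v (z - x) \<le> norm (z - x)" for z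
    using norm_cauchy_schwarz[of v "z - x"] mult_right_mono[OF \<open>norm v \<le> 1\<close>, of "norm (z - x)"]
    by simp
  have "continuous_on UNIV F"
    unfolding F_def using assms(1) by (intro continuous_intros)
  moreover have "F x \<le> F z" if "1 / c < dist x z" for z
  proof -
    have "1 < c * norm (z - x)"
      using that \<open>c > 0\<close> by (simp add: dist_norm norm_minus_commute field_simps)
    then have "1 * norm (z - x) < c * norm (z - x) * norm (z - x)"
      by (intro mult_strict_right_mono) (use \<open>c > 0\<close> in \<open>auto simp: zero_less_mult_iff\<close>)
    then show ?thesis
      using inner_le[of z] assms(2)[of z] \<open>P x = 0\<close> by (simp add: F_def power2_eq_square)
  qed
  ultimately obtain z where min: "\<And>z'. F z \<le> F z'"
    using continuous_attains_global_min by blast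
  then have "F z \<le> 0"
    using min[of x] \<open>P x = 0\<close> by (simp add: F_def)
  then have "c * norm (z - x) * norm (z - x) \<le> 1 * norm (z - x)"
    using inner_le[of z] assms(2)[of z] by (simp add: F_def power2_eq_square)
  then have "c * norm (z - x) \<le> 1"
    by (cases "norm (z - x) = 0") (auto simp: mult_le_cancel_right)
  then have "norm (z - x) \<le> 1 / c"
    using \<open>c > 0\<close> by (simp add: pos_le_divide_eq mult.commute)
  then show thesis
    using \<open>F z \<le> 0\<close> min unfolding F_def by (rule that)
qed

lemma exact_penalty_minimizer_near:
  fixes x v :: "'a::euclidean_space" and S :: "'i \<Rightarrow> 'a set"
  assumes "finite I" and S: "\<And>l. l \<in> I \<Longrightarrow> closed (S l)" "\<And>l. l \<in> I \<Longrightarrow> x \<in> S l"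
    and "norm v \<le> 1" "c > 0"
    and feasible: "\<And>z. \<forall>l\<in>I. z \<in> S l \<Longrightarrow> \<rho> \<le> norm (z - x) \<Longrightarrow> norm (z - x) \<le> 1 / c
      \<Longrightarrow> inner v (z - x) < c * (norm (z - x))\<^sup>2"
  obtains k z where "k > 0" "norm (z - x) < \<rho>" "norm (z - x) \<le> 1 / c"
    "\<And>z'. c * (norm (z - x))\<^sup>2 - inner v (z - x) + k * (\<Sum>l\<in>I. (infdist z (S l))\<^sup>2)
      \<le> c * (norm (z' - x))\<^sup>2 - inner v (z' - x) + k * (\<Sum>l\<in>I. (infdist z' (S l))\<^sup>2)"
proof -
  define \<phi> where "\<phi> z = c * (norm (z - x))\<^sup>2 - inner v (z - x)" for z
  define \<psi> where "\<psi> z = (\<Sum>l\<in>I. (infdist z (S l))\<^sup>2)" for z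
  have \<psi>_nonneg: "0 \<le> \<psi> z" for z
    by (simp add: \<psi>_def sum_nonneg)
  have continuous: "continuous_on U \<phi>" "continuous_on U \<psi>" for U
    unfolding \<phi>_def \<psi>_def by (intro continuous_intros)+
  \<comment> \<open>On the compact annulus \<open>A\<close> the penalty is positive once \<open>k\<close> is large; since it vanishes at \<open>x\<close>,
    its minimizers avoid \<open>A\<close>.\<close>
  define A where "A = cball x (1 / c) - ball x \<rho>"
  have "0 < \<phi> z" if "z \<in> A" "\<psi> z = 0" for z
  proof -
    have "z \<in> S l" if "l \<in> I" for l
      using \<open>\<psi> z = 0\<close> \<open>finite I\<close> that S[OF that] in_closed_iff_infdist_zero[of "S l" z]
      by (auto simp: \<psi>_def sum_nonneg_eq_0_iff)
    then show ?thesis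
      using feasible[of z] \<open>z \<in> A\<close> by (auto simp: \<phi>_def A_def dist_norm norm_minus_commute)
  qed
  moreover have "compact A"
    unfolding A_def by (intro compact_diff compact_cball open_ball)
  ultimately obtain k where "k > 0" and penalty_pos: "\<And>z. z \<in> A \<Longrightarrow> 0 < \<phi> z + k * \<psi> z"
    using exact_penalty_on_compact continuous \<psi>_nonneg by metis
  have "continuous_on UNIV (\<lambda>z. k * \<psi> z)" "\<And>z. 0 \<le> k * \<psi> z" "k * \<psi> x = 0"
    using continuous \<psi>_nonneg \<open>k > 0\<close> S(2) by (auto intro!: continuous_intros simp: \<psi>_def)
  then obtain z where "norm (z - x) \<le> 1 / c" "\<phi> z + k * \<psi> z \<le> 0"
    and min: "\<And>z'. \<phi> z + k * \<psi> z \<le> \<phi> z' + k * \<psi> z'"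
    using quadratic_penalty_global_min[OF _ _ _ \<open>norm v \<le> 1\<close> \<open>c > 0\<close>] unfolding \<phi>_def by blast
  moreover have "z \<notin> A"
    using penalty_pos[of z] \<open>\<phi> z + k * \<psi> z \<le> 0\<close> by linarith
  ultimately have "norm (z - x) < \<rho>"
    by (auto simp: A_def dist_norm norm_minus_commute)
  then show thesis
    by (rule that[OF \<open>k > 0\<close> _ \<open>norm (z - x) \<le> 1 / c\<close> min[unfolded \<phi>_def \<psi>_def]])
qed

lemma penalty_minimizer_nearest_points:
  fixes x v z :: "'a::euclidean_space" and S :: "'i \<Rightarrow> 'a set"
  assumes "finite I" and S: "\<And>l. l \<in> I \<Longrightarrow> closed (S l)" "\<And>l. l \<in> I \<Longrightarrow> x \<in> S l"
    and "k \<ge> 0"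
    and min: "\<And>z'. c * (norm (z - x))\<^sup>2 - inner v (z - x) + k * (\<Sum>l\<in>I. (infdist z (S l))\<^sup>2)
                \<le> c * (norm (z' - x))\<^sup>2 - inner v (z' - x) + k * (\<Sum>l\<in>I. (infdist z' (S l))\<^sup>2)"
  obtains y where "\<And>l. l \<in> I \<Longrightarrow> y l \<in> S l" "\<And>l q. l \<in> I \<Longrightarrow> q \<in> S l \<Longrightarrow> dist z (y l) \<le> dist z q"
    "\<And>l. l \<in> I \<Longrightarrow> norm (y l - x) \<le> 2 * norm (z - x)"
    "v = (2 * c) *\<^sub>R (z - x) + (\<Sum>l\<in>I. (2 * k) *\<^sub>R (z - y l))"
proof -
  have "\<forall>l\<in>I. \<exists>q. q \<in> S l \<and> infdist z (S l) = dist z q"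
  proof
    fix l assume "l \<in> I"
    then show "\<exists>q. q \<in> S l \<and> infdist z (S l) = dist z q"
      using infdist_attains_inf[of "S l" z] S[of l] by blast
  qed
  then obtain y where y: "\<And>l. l \<in> I \<Longrightarrow> y l \<in> S l" "\<And>l. l \<in> I \<Longrightarrow> infdist z (S l) = dist z (y l)"
    by metis
  have nearest: "dist z (y l) \<le> dist z q" if "l \<in> I" "q \<in> S l" for l q
    using infdist_le[OF that(2), of z] y(2)[OF that(1)] by simp
  have y_near: "norm (y l - x) \<le> 2 * norm (z - x)" if "l \<in> I" for l
  proof -
    have "norm (y l - x) \<le> dist z (y l) + norm (z - x)"
      using norm_triangle_ineq[of "y l - z" "z - x"] by (simp add: dist_norm norm_minus_commute)
    also have "dist z (y l) \<le> norm (z - x)"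
      using nearest[OF that S(2)[OF that]] by (simp add: dist_norm)
    finally show ?thesis
      by simp
  qed
  have "v = (2 * c) *\<^sub>R (z - x) + (\<Sum>l\<in>I. (2 * k) *\<^sub>R (z - y l))"
    using \<open>finite I\<close> \<open>k \<ge> 0\<close> y min by (rule penalty_minimizer_decomposition)
  with y(1) nearest y_near show thesis
    by (rule that)
qed

lemma nearest_point_of_localization_in_regular_normal_cone:
  fixes x y z :: "'a::euclidean_space"
  assumes "y \<in> K" "norm (y - x) < \<delta>" "t \<ge> 0"
    and nearest: "\<And>q. q \<in> K \<inter> cball x \<delta> \<Longrightarrow> dist z y \<le> dist z q"
  shows "t *\<^sub>R (z - y) \<in> regular_normal_cone K y"
proof (rule proximal_normal_in_regular_normal_cone)
  show "y \<in> K" "0 < \<delta> - norm (y - x)" "0 \<le> t"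
    using assms(1-3) by auto
  fix q assume "q \<in> K" "norm (q - y) < \<delta> - norm (y - x)"
  moreover have "norm (q - x) \<le> norm (q - y) + norm (y - x)"
    using norm_triangle_ineq[of "q - y" "y - x"] by simp
  ultimately show "dist z y \<le> dist z q"
    by (intro nearest) (simp add: dist_norm norm_minus_commute)
qed

lemma regular_normal_cone_quadratic_domination:
  assumes "v \<in> regular_normal_cone C x" "\<theta> > 0"
  obtains c where "c \<ge> 4" "\<And>z. z \<in> C \<Longrightarrow> \<theta> / (2 * c) \<le> norm (z - x) \<Longrightarrow> norm (z - x) \<le> 1 / c
    \<Longrightarrow> inner v (z - x) < c * (norm (z - x))\<^sup>2"
proof -
  have "\<exists>d>0. \<forall>z\<in>C. norm (z - x) < d \<longrightarrow> inner v (z - x) \<le> e * norm (z - x)" if "e > 0" for e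
    using assms(1) that by (simp add: regular_normal_cone_def)
  from this[of "\<theta> / 4"] obtain d where "d > 0"
    and regular: "\<And>z. z \<in> C \<Longrightarrow> norm (z - x) < d \<Longrightarrow> inner v (z - x) \<le> \<theta> / 4 * norm (z - x)"
    using \<open>\<theta> > 0\<close> by auto
  define c where "c = 4 / min 1 (d / 2)"
  have c: "c \<ge> 4" "1 / c < d"
    using \<open>d > 0\<close> by (auto simp: c_def field_simps min_def)
  have "inner v (z - x) < c * (norm (z - x))\<^sup>2"
    if "z \<in> C" "\<theta> / (2 * c) \<le> norm (z - x)" "norm (z - x) \<le> 1 / c" for z
  proof -
    have "inner v (z - x) \<le> \<theta> / 4 * norm (z - x)"
      using that(1,3) c(2) by (intro regular) auto
    also have "\<dots> < c * norm (z - x) * norm (z - x)"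
    proof (rule mult_strict_right_mono)
      have "\<theta> / 2 \<le> c * norm (z - x)"
        using that(2) c(1) by (simp add: field_simps)
      then show "\<theta> / 4 < c * norm (z - x)"
        using \<open>\<theta> > 0\<close> by linarith
      have "0 < \<theta> / (2 * c)"
        using c(1) \<open>\<theta> > 0\<close> by simp
      then show "0 < norm (z - x)"
        using that(2) by linarith
    qed
    finally show ?thesis
      by (simp add: power2_eq_square)
  qed
  with c(1) show thesis
    by (rule that)
qed

lemma regular_normal_cone_Inter_fuzzy:
  fixes K :: "'i \<Rightarrow> 'a::euclidean_space set"
  assumes "finite I" and closed: "\<And>l. l \<in> I \<Longrightarrow> closed (K l)"
    and v: "v \<in> regular_normal_cone (\<Inter>l\<in>I. K l) x" "norm v = 1" and "\<theta> > 0"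
  obtains y w where "\<And>l. l \<in> I \<Longrightarrow> y l \<in> K l" "\<And>l. l \<in> I \<Longrightarrow> norm (y l - x) \<le> \<theta>"
    "\<And>l. l \<in> I \<Longrightarrow> w l \<in> regular_normal_cone (K l) (y l)" "norm (v - (\<Sum>l\<in>I. w l)) \<le> \<theta>"
proof -
  obtain c where "c \<ge> 4" and domination: "\<And>z. z \<in> (\<Inter>l\<in>I. K l) \<Longrightarrow> \<theta> / (2 * c) \<le> norm (z - x)
      \<Longrightarrow> norm (z - x) \<le> 1 / c \<Longrightarrow> inner v (z - x) < c * (norm (z - x))\<^sup>2"
    using regular_normal_cone_quadratic_domination[OF v(1) \<open>\<theta> > 0\<close>] by blast
  \<comment> \<open>Localizing to \<open>cball x \<delta>\<close> turns nearest points of \<open>S l\<close> into proximal points of \<open>K l\<close>.\<close>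
  define \<delta> where "\<delta> = 4 / c"
  define S where "S l = K l \<inter> cball x \<delta>" for l
  have "x \<in> (\<Inter>l\<in>I. K l)"
    using v(1) by (rule regular_normal_cone_memD)
  then have S: "closed (S l)" "x \<in> S l" if "l \<in> I" for l
    using closed[OF that] that \<open>c \<ge> 4\<close> by (auto simp: S_def \<delta>_def closed_Int)
  have "norm v \<le> 1" "c > 0"
    using v(2) \<open>c \<ge> 4\<close> by simp_all
  then obtain k z where "k > 0" "norm (z - x) < \<theta> / (2 * c)" "norm (z - x) \<le> 1 / c" and
    min: "\<And>z'. c * (norm (z - x))\<^sup>2 - inner v (z - x) + k * (\<Sum>l\<in>I. (infdist z (S l))\<^sup>2)
      \<le> c * (norm (z' - x))\<^sup>2 - inner v (z' - x) + k * (\<Sum>l\<in>I. (infdist z' (S l))\<^sup>2)"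
    using exact_penalty_minimizer_near[where I = I and S = S and x = x and v = v and c = c
        and \<rho> = "\<theta> / (2 * c)", OF \<open>finite I\<close> S _ _ domination]
    by (auto simp: S_def)
  obtain y where y: "\<And>l. l \<in> I \<Longrightarrow> y l \<in> S l"
    "\<And>l q. l \<in> I \<Longrightarrow> q \<in> S l \<Longrightarrow> dist z (y l) \<le> dist z q"
    "\<And>l. l \<in> I \<Longrightarrow> norm (y l - x) \<le> 2 * norm (z - x)"
    and decomposition: "v = (2 * c) *\<^sub>R (z - x) + (\<Sum>l\<in>I. (2 * k) *\<^sub>R (z - y l))"
    using penalty_minimizer_nearest_points[where I = I and S = S and x = x and v = v and z = z and c = c
        and k = k, OF \<open>finite I\<close> S less_imp_le[OF \<open>k > 0\<close>] min]
    by blast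
  have y_near: "norm (y l - x) \<le> \<theta>" "norm (y l - x) < \<delta>" if "l \<in> I" for l
  proof -
    have "2 * norm (z - x) < \<theta> / c"
      using \<open>norm (z - x) < \<theta> / (2 * c)\<close> \<open>c > 0\<close> by (simp add: field_simps)
    moreover have "\<theta> / c \<le> \<theta>" "\<delta> = 4 * (1 / c)" "1 / c > 0"
      using \<open>c \<ge> 4\<close> \<open>\<theta> > 0\<close> by (simp_all add: \<delta>_def field_simps)
    ultimately show "norm (y l - x) \<le> \<theta>" "norm (y l - x) < \<delta>"
      using y(3)[OF that] \<open>norm (z - x) \<le> 1 / c\<close> by linarith+
  qed
  show thesis
  proof (rule that)
    fix l assume "l \<in> I"
    then show "y l \<in> K l" "norm (y l - x) \<le> \<theta>"
      using y(1)[of l] y_near(1)[of l] by (auto simp: S_def)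
    show "(2 * k) *\<^sub>R (z - y l) \<in> regular_normal_cone (K l) (y l)"
      using \<open>y l \<in> K l\<close> y_near(2)[OF \<open>l \<in> I\<close>] \<open>k > 0\<close> y(2)[OF \<open>l \<in> I\<close>]
      by (intro nearest_point_of_localization_in_regular_normal_cone) (auto simp: S_def)
  next
    have "norm (v - (\<Sum>l\<in>I. (2 * k) *\<^sub>R (z - y l))) = 2 * c * norm (z - x)"
      using \<open>c > 0\<close> by (subst decomposition) simp
    also have "\<dots> \<le> \<theta>"
      using \<open>norm (z - x) < \<theta> / (2 * c)\<close> \<open>c > 0\<close> by (simp add: field_simps)
    finally show "norm (v - (\<Sum>l\<in>I. (2 * k) *\<^sub>R (z - y l))) \<le> \<theta>" .
  qed
qed

lemma common_convergent_subseq: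
  fixes f :: "nat \<Rightarrow> 'i \<Rightarrow> 'a::euclidean_space"
  assumes "finite I" "\<And>j l. l \<in> I \<Longrightarrow> norm (f j l) \<le> B"
  shows "\<exists>r g. strict_mono r \<and> (\<forall>l\<in>I. (\<lambda>j. f (r j) l) \<longlonglongrightarrow> g l)"
  using assms
proof (induction I rule: finite_induct)
  case empty
  show ?case
    using strict_mono_id by blast
next
  case (insert a I)
  then obtain r g where r: "strict_mono r" "\<forall>l\<in>I. (\<lambda>j. f (r j) l) \<longlonglongrightarrow> g l"
    by auto
  have "bounded (range (\<lambda>j. f (r j) a))"
    using insert.prems by (auto simp: bounded_iff)
  then obtain g\<^sub>a s where s: "strict_mono s" "((\<lambda>j. f (r j) a) \<circ> s) \<longlonglongrightarrow> g\<^sub>a"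
    using bounded_imp_convergent_subsequence by blast
  have "(\<lambda>j. f ((r \<circ> s) j) l) \<longlonglongrightarrow> (g(a := g\<^sub>a)) l" if "l \<in> insert a I" for l
  proof (cases "l = a")
    case False
    then show ?thesis
      using LIMSEQ_subseq_LIMSEQ[OF r(2)[rule_format] s(1), of l] that by (simp add: o_def)
  qed (use s(2) in \<open>simp add: o_def\<close>)
  moreover have "strict_mono (r \<circ> s)"
    using r(1) s(1) by (rule strict_mono_o)
  ultimately show ?case
    by blast
qed

lemma linearly_regular_intersection_no_degenerate_normals:
  fixes K :: "nat \<Rightarrow> 'a::euclidean_space set" and Y W :: "nat \<Rightarrow> nat \<Rightarrow> 'a"
  assumes "linearly_regular_intersection m K xb"
    and Y: "\<And>j l. l \<in> {1..m} \<Longrightarrow> Y j l \<in> K l" "\<And>l. l \<in> {1..m} \<Longrightarrow> (\<lambda>j. Y j l) \<longlonglongrightarrow> xb"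
    and W: "\<And>j l. l \<in> {1..m} \<Longrightarrow> W j l \<in> regular_normal_cone (K l) (Y j l)"
    and W_norm: "\<And>j. (\<Sum>l=1..m. norm (W j l)) = 1" and W_sum: "(\<lambda>j. \<Sum>l=1..m. W j l) \<longlonglongrightarrow> 0"
  shows False
proof -
  let ?I = "{1..m}"
  have "norm (W j l) \<le> 1" if "l \<in> ?I" for j l
    using member_le_sum[of l ?I "\<lambda>l. norm (W j l)"] that W_norm[of j] by simp
  then obtain r g where r: "strict_mono r" "\<forall>l\<in>?I. (\<lambda>j. W (r j) l) \<longlonglongrightarrow> g l"
    using common_convergent_subseq[of ?I W 1] by auto
  have "g l \<in> limiting_normal_cone (K l) xb" if "l \<in> ?I" for l
    unfolding limiting_normal_cone_def
    using Y(1) LIMSEQ_subseq_LIMSEQ[OF Y(2) r(1)] W r(2) that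
    by (intro CollectI exI[of _ "\<lambda>j. Y (r j) l"] exI[of _ "\<lambda>j. W (r j) l"]) (auto simp: o_def)
  moreover have "(\<Sum>l\<in>?I. g l) = 0"
  proof (rule LIMSEQ_unique)
    show "(\<lambda>j. \<Sum>l\<in>?I. W (r j) l) \<longlonglongrightarrow> (\<Sum>l\<in>?I. g l)"
      using r(2) by (intro tendsto_sum) auto
    show "(\<lambda>j. \<Sum>l\<in>?I. W (r j) l) \<longlonglongrightarrow> 0"
      using LIMSEQ_subseq_LIMSEQ[OF W_sum r(1)] by (simp add: o_def)
  qed
  ultimately have "\<forall>l\<in>?I. g l = 0"
    using assms(1) unfolding linearly_regular_intersection_def by blast
  moreover have "(\<lambda>j. \<Sum>l\<in>?I. norm (W (r j) l)) \<longlonglongrightarrow> (\<Sum>l\<in>?I. norm (g l))"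
    using r(2) by (intro tendsto_sum tendsto_norm) auto
  then have "(\<Sum>l\<in>?I. norm (g l)) = 1"
    using W_norm by (simp add: LIMSEQ_const_iff)
  ultimately show False
    by simp
qed

lemma linearly_regular_intersection_bound:
  fixes K :: "nat \<Rightarrow> 'a::euclidean_space set"
  assumes "linearly_regular_intersection m K xb"
  obtains \<delta> C where "\<delta> > 0" "C > 0"
    "\<And>y w. \<forall>l\<in>{1..m}. y l \<in> K l \<and> norm (y l - xb) \<le> \<delta> \<and> w l \<in> regular_normal_cone (K l) (y l)
      \<Longrightarrow> (\<Sum>l=1..m. norm (w l)) \<le> C * norm (\<Sum>l=1..m. w l)"
proof -
  let ?I = "{1..m}"
  have "\<exists>\<delta>>0. \<exists>C>0. \<forall>y w. (\<forall>l\<in>?I. y l \<in> K l \<and> norm (y l - xb) \<le> \<delta> \<and> w l \<in> regular_normal_cone (K l) (y l))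
     \<longrightarrow> (\<Sum>l\<in>?I. norm (w l)) \<le> C * norm (\<Sum>l\<in>?I. w l)"
  proof (rule ccontr)
    assume violated: "\<not> ?thesis"
    have "\<exists>y w. (\<forall>l\<in>?I. y l \<in> K l \<and> norm (y l - xb) \<le> 1 / Suc j \<and> w l \<in> regular_normal_cone (K l) (y l))
       \<and> Suc j * norm (\<Sum>l\<in>?I. w l) < (\<Sum>l\<in>?I. norm (w l))" for j :: nat
    proof -
      have "1 / real (Suc j) > 0" "real (Suc j) > 0"
        by auto
      then show ?thesis
        using violated by (meson not_le)
    qed
    then obtain Y W where Y: "\<And>j l. l \<in> ?I \<Longrightarrow> Y j l \<in> K l" "\<And>j l. l \<in> ?I \<Longrightarrow> norm (Y j l - xb) \<le> 1 / Suc j"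
      and W: "\<And>j l. l \<in> ?I \<Longrightarrow> W j l \<in> regular_normal_cone (K l) (Y j l)"
      and violation: "\<And>j. Suc j * norm (\<Sum>l\<in>?I. W j l) < (\<Sum>l\<in>?I. norm (W j l))"
      by metis
    define s where "s j = (\<Sum>l\<in>?I. norm (W j l))" for j
    have s_pos: "s j > 0" for j
    proof -
      have "0 \<le> Suc j * norm (\<Sum>l\<in>?I. W j l)"
        by simp
      then show ?thesis
        using violation[of j] unfolding s_def by linarith
    qed
    have inverse_lim: "(\<lambda>j. 1 / real (Suc j)) \<longlonglongrightarrow> 0"
      using LIMSEQ_inverse_real_of_nat by (simp add: inverse_eq_divide)
    show False
    proof (rule linearly_regular_intersection_no_degenerate_normals[OF assms Y(1) _ regular_normal_cone_scaleR])
      show "(\<lambda>j. Y j l) \<longlonglongrightarrow> xb" if "l \<in> ?I" for l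
        using Lim_null_comparison[OF _ inverse_lim, of "\<lambda>j. Y j l - xb"] Y(2)[OF that]
        by (simp add: LIM_zero_iff)
      show "W j l \<in> regular_normal_cone (K l) (Y j l)" "0 \<le> 1 / s j" if "l \<in> ?I" for j l
        using W[OF that] s_pos[of j] by auto
      show "(\<Sum>l\<in>?I. norm ((1 / s j) *\<^sub>R W j l)) = 1" for j
        using s_pos[of j] by (simp add: sum_divide_distrib[symmetric] s_def)
      have "norm (\<Sum>l\<in>?I. (1 / s j) *\<^sub>R W j l) \<le> 1 / Suc j" for j
      proof -
        have "norm (\<Sum>l\<in>?I. (1 / s j) *\<^sub>R W j l) = norm (\<Sum>l\<in>?I. W j l) / s j"
          using s_pos[of j] by (simp flip: scaleR_sum_right)
        also have "\<dots> \<le> 1 / Suc j"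
          using violation[of j] s_pos[of j] by (simp add: s_def field_simps)
        finally show ?thesis .
      qed
      then show "(\<lambda>j. \<Sum>l\<in>?I. (1 / s j) *\<^sub>R W j l) \<longlonglongrightarrow> 0"
        by (intro Lim_null_comparison[OF _ inverse_lim]) auto
    qed
  qed
  then show ?thesis
    using that by blast
qed

lemma regular_normal_bound_homogeneous:
  assumes unit: "\<And>u. u \<in> regular_normal_cone C y \<Longrightarrow> norm u = 1 \<Longrightarrow> inner u (y - xb) \<le> M * (norm (y - xb))\<^sup>2"
    and "w \<in> regular_normal_cone C y"
  shows "inner w (y - xb) \<le> M * norm w * (norm (y - xb))\<^sup>2"
proof (cases "w = 0")
  case False
  have "(1 / norm w) *\<^sub>R w \<in> regular_normal_cone C y"
    using assms(2) by (rule regular_normal_cone_scaleR) simp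
  then have "inner ((1 / norm w) *\<^sub>R w) (y - xb) \<le> M * (norm (y - xb))\<^sup>2"
    using False by (intro unit) auto
  then have "norm w * inner ((1 / norm w) *\<^sub>R w) (y - xb) \<le> norm w * (M * (norm (y - xb))\<^sup>2)"
    by (rule mult_left_mono) simp
  then show ?thesis
    using False by (simp add: algebra_simps)
qed simp

lemma SOSH_imp_regular_normal_bound:
  assumes "SOSH C xb"
  obtains d M where "d > 0" "M > 0" "\<And>y w. y \<in> C \<Longrightarrow> norm (y - xb) \<le> d \<Longrightarrow> w \<in> regular_normal_cone C y
      \<Longrightarrow> inner w (y - xb) \<le> M * norm w * (norm (y - xb))\<^sup>2"
proof -
  obtain d M where "d > 0" "M > 0" and sosh: "\<And>x v. x \<in> (cball xb d \<inter> C) - {xb} \<Longrightarrow>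
      v \<in> limiting_normal_cone C x \<Longrightarrow> norm v = 1 \<Longrightarrow> inner v (x - xb) \<le> M * (norm (xb - x))\<^sup>2"
    using assms unfolding SOSH_def by blast
  have "inner w (y - xb) \<le> M * norm w * (norm (y - xb))\<^sup>2"
    if "y \<in> C" "norm (y - xb) \<le> d" "w \<in> regular_normal_cone C y" for y w
  proof (cases "y = xb")
    case False
    then have "y \<in> (cball xb d \<inter> C) - {xb}"
      using that by (auto simp: dist_norm norm_minus_commute)
    show ?thesis
    proof (rule regular_normal_bound_homogeneous[OF _ that(3)])
      fix u assume "u \<in> regular_normal_cone C y" "norm u = 1"
      then have "inner u (y - xb) \<le> M * (norm (xb - y))\<^sup>2"
        using sosh[OF \<open>y \<in> (cball xb d \<inter> C) - {xb}\<close>] regular_normal_cone_subset_limiting by blast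
      then show "inner u (y - xb) \<le> M * (norm (y - xb))\<^sup>2"
        by (simp add: norm_minus_commute)
    qed
  qed simp
  with \<open>d > 0\<close> \<open>M > 0\<close> show ?thesis
    using that by blast
qed

lemma SOSH_family_regular_normal_bound:
  assumes "finite I" "\<And>l. l \<in> I \<Longrightarrow> SOSH (K l) xb"
  obtains d M where "d > 0" "M > 0" "\<And>l y w. l \<in> I \<Longrightarrow> y \<in> K l \<Longrightarrow> norm (y - xb) \<le> d
      \<Longrightarrow> w \<in> regular_normal_cone (K l) y \<Longrightarrow> inner w (y - xb) \<le> M * norm w * (norm (y - xb))\<^sup>2"
proof -
  have "\<exists>d M. d > 0 \<and> M > 0 \<and> (\<forall>y w. y \<in> K l \<longrightarrow> norm (y - xb) \<le> d \<longrightarrow>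
      w \<in> regular_normal_cone (K l) y \<longrightarrow> inner w (y - xb) \<le> M * norm w * (norm (y - xb))\<^sup>2)"
    if "l \<in> I" for l
    by (rule SOSH_imp_regular_normal_bound[OF assms(2)[OF that]]) blast
  then obtain d M where d: "\<And>l. l \<in> I \<Longrightarrow> d l > 0" and M: "\<And>l. l \<in> I \<Longrightarrow> M l > 0"
    and bound: "\<And>l y w. l \<in> I \<Longrightarrow> y \<in> K l \<Longrightarrow> norm (y - xb) \<le> d l \<Longrightarrow>
      w \<in> regular_normal_cone (K l) y \<Longrightarrow> inner w (y - xb) \<le> M l * norm w * (norm (y - xb))\<^sup>2"
    by metis
  define d\<^sub>0 where "d\<^sub>0 = Min (insert 1 (d ` I))"
  define M\<^sub>0 where "M\<^sub>0 = Max (insert 1 (M ` I))"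
  have "d\<^sub>0 > 0"
    using d assms(1) by (simp add: d\<^sub>0_def)
  have d\<^sub>0_le: "d\<^sub>0 \<le> d l" and M\<^sub>0_ge: "M l \<le> M\<^sub>0" if "l \<in> I" for l
    using that assms(1) by (simp_all add: d\<^sub>0_def M\<^sub>0_def)
  moreover have "1 \<le> M\<^sub>0"
    unfolding M\<^sub>0_def using assms(1) by (intro Max_ge) auto
  ultimately show ?thesis
  proof (intro that[of d\<^sub>0 M\<^sub>0])
    fix l y w assume "l \<in> I" "y \<in> K l" "norm (y - xb) \<le> d\<^sub>0" "w \<in> regular_normal_cone (K l) y"
    moreover have "norm (y - xb) \<le> d l"
      using \<open>norm (y - xb) \<le> d\<^sub>0\<close> d\<^sub>0_le[OF \<open>l \<in> I\<close>] by linarith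
    ultimately have "inner w (y - xb) \<le> M l * norm w * (norm (y - xb))\<^sup>2"
      by (intro bound)
    also have "\<dots> \<le> M\<^sub>0 * norm w * (norm (y - xb))\<^sup>2"
      using M\<^sub>0_ge[OF \<open>l \<in> I\<close>] by (intro mult_right_mono) auto
    finally show "inner w (y - xb) \<le> M\<^sub>0 * norm w * (norm (y - xb))\<^sup>2" .
  qed (use \<open>d\<^sub>0 > 0\<close> in auto)
qed

lemma regular_normal_bound_imp_SOSH:
  assumes "d > 0" "M > 0"
    and bound: "\<And>y w. y \<in> C \<Longrightarrow> norm (y - xb) \<le> d \<Longrightarrow> w \<in> regular_normal_cone C y
      \<Longrightarrow> inner w (y - xb) \<le> M * norm w * (norm (y - xb))\<^sup>2"
  shows "SOSH C xb"
proof -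
  have "inner v (x - xb) \<le> M * (norm (xb - x))\<^sup>2"
    if x: "x \<in> cball xb (d / 2)" and v: "v \<in> limiting_normal_cone C x" "norm v = 1" for x v
  proof -
    obtain xs ys where s: "\<And>i. xs i \<in> C" "xs \<longlonglongrightarrow> x" "\<And>i. ys i \<in> regular_normal_cone C (xs i)" "ys \<longlonglongrightarrow> v"
      using v(1) unfolding limiting_normal_cone_def by blast
    have "(\<lambda>i. norm (xs i - xb)) \<longlonglongrightarrow> norm (x - xb)"
      using s(2) by (intro tendsto_intros)
    moreover have "norm (x - xb) < d"
      using x \<open>d > 0\<close> by (simp add: dist_norm norm_minus_commute)
    ultimately have "eventually (\<lambda>i. norm (xs i - xb) < d) sequentially"
      by (rule order_tendstoD)
    then have "eventually (\<lambda>i. inner (ys i) (xs i - xb) \<le> M * norm (ys i) * (norm (xs i - xb))\<^sup>2) sequentially"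
      by (rule eventually_mono) (use bound s(1,3) in \<open>simp add: less_imp_le\<close>)
    moreover have "(\<lambda>i. inner (ys i) (xs i - xb)) \<longlonglongrightarrow> inner v (x - xb)"
      "(\<lambda>i. M * norm (ys i) * (norm (xs i - xb))\<^sup>2) \<longlonglongrightarrow> M * norm v * (norm (x - xb))\<^sup>2"
      using s(2,4) by (auto intro!: tendsto_intros)
    ultimately have "inner v (x - xb) \<le> M * norm v * (norm (x - xb))\<^sup>2"
      using tendsto_le[OF trivial_limit_sequentially] by blast
    then show ?thesis
      using v(2) by (simp add: norm_minus_commute)
  qed
  then show ?thesis
    unfolding SOSH_def using assms(1,2) by (intro exI[of _ "d / 2"] exI[of _ M]) auto
qed

lemma inner_bound_of_approximate_normal_sum:
  fixes v x xb :: "'a::real_inner" and y w :: "'i \<Rightarrow> 'a"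
  assumes "finite I" "norm v \<le> 1" "0 \<le> \<theta>" "\<theta> \<le> 1" "0 \<le> C" "0 \<le> M"
    and near: "\<And>l. l \<in> I \<Longrightarrow> norm (y l - x) \<le> \<theta>"
    and approx: "norm (v - (\<Sum>l\<in>I. w l)) \<le> \<theta>"
    and qualification: "(\<Sum>l\<in>I. norm (w l)) \<le> C * norm (\<Sum>l\<in>I. w l)"
    and bound: "\<And>l. l \<in> I \<Longrightarrow> inner (w l) (y l - xb) \<le> M * norm (w l) * (norm (y l - xb))\<^sup>2"
  shows "inner v (x - xb) \<le> 2 * C * M * (norm (x - xb))\<^sup>2
    + \<theta> * (norm (x - xb) + 2 * C + 2 * C * M * (2 * norm (x - xb) + 1))"
proof -
  define a where "a = norm (x - xb)"
  define s where "s = (\<Sum>l\<in>I. norm (w l))"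
  have "norm (\<Sum>l\<in>I. w l) \<le> 2"
    using norm_triangle_ineq[of v "(\<Sum>l\<in>I. w l) - v"] approx assms(2,4)
    by (simp add: norm_minus_commute)
  then have s: "0 \<le> s" "s \<le> 2 * C"
    using qualification mult_left_mono[of _ 2 C] \<open>0 \<le> C\<close> by (force simp: s_def sum_nonneg)+
  have y_near_xb: "norm (y l - xb) \<le> a + \<theta>" if "l \<in> I" for l
    using norm_triangle_ineq[of "y l - x" "x - xb"] near[OF that] by (simp add: a_def)
  have "inner v (x - xb) = inner (v - (\<Sum>l\<in>I. w l)) (x - xb)
      + (\<Sum>l\<in>I. inner (w l) (x - y l)) + (\<Sum>l\<in>I. inner (w l) (y l - xb))"
    by (simp add: inner_diff_left inner_diff_right inner_sum_left sum_subtractf)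
  also have "inner (v - (\<Sum>l\<in>I. w l)) (x - xb) \<le> \<theta> * a"
    using norm_cauchy_schwarz[of "v - (\<Sum>l\<in>I. w l)" "x - xb"] approx
      mult_right_mono[OF approx, of a] by (simp add: a_def)
  also have "(\<Sum>l\<in>I. inner (w l) (x - y l)) \<le> (\<Sum>l\<in>I. \<theta> * norm (w l))"
  proof (rule sum_mono)
    fix l assume "l \<in> I"
    have "inner (w l) (x - y l) \<le> norm (w l) * norm (x - y l)"
      by (rule norm_cauchy_schwarz)
    also have "\<dots> \<le> norm (w l) * \<theta>"
      using near[OF \<open>l \<in> I\<close>] by (intro mult_left_mono) (auto simp: norm_minus_commute)
    finally show "inner (w l) (x - y l) \<le> \<theta> * norm (w l)"
      by (simp add: mult.commute)
  qed
  also have "(\<Sum>l\<in>I. inner (w l) (y l - xb)) \<le> (\<Sum>l\<in>I. M * (a + \<theta>)\<^sup>2 * norm (w l))"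
  proof (rule sum_mono)
    fix l assume "l \<in> I"
    have "inner (w l) (y l - xb) \<le> M * norm (w l) * (norm (y l - xb))\<^sup>2"
      using bound[OF \<open>l \<in> I\<close>] .
    also have "\<dots> \<le> M * norm (w l) * (a + \<theta>)\<^sup>2"
      using y_near_xb[OF \<open>l \<in> I\<close>] \<open>0 \<le> M\<close> by (intro mult_left_mono power_mono) auto
    finally show "inner (w l) (y l - xb) \<le> M * (a + \<theta>)\<^sup>2 * norm (w l)"
      by (simp add: algebra_simps)
  qed
  also have "\<theta> * a + (\<Sum>l\<in>I. \<theta> * norm (w l)) + (\<Sum>l\<in>I. M * (a + \<theta>)\<^sup>2 * norm (w l))
      = \<theta> * a + \<theta> * s + M * (a + \<theta>)\<^sup>2 * s"
    by (simp add: s_def sum_distrib_left)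
  also have "\<dots> \<le> \<theta> * a + \<theta> * (2 * C) + M * (a\<^sup>2 + \<theta> * (2 * a + 1)) * (2 * C)"
  proof -
    have "(a + \<theta>)\<^sup>2 \<le> a\<^sup>2 + \<theta> * (2 * a + 1)"
      using \<open>0 \<le> \<theta>\<close> \<open>\<theta> \<le> 1\<close> mult_left_mono[of \<theta> 1 \<theta>]
      by (simp add: power2_eq_square algebra_simps)
    then show ?thesis
      using s \<open>0 \<le> \<theta>\<close> \<open>0 \<le> M\<close> by (intro add_mono mult_mono mult_left_mono) (auto simp: a_def)
  qed
  finally show ?thesis
    by (simp add: a_def algebra_simps)
qed

lemma Inter_regular_normal_bound:
  fixes K :: "'i \<Rightarrow> 'a::euclidean_space set"
  assumes "finite I" "\<And>l. l \<in> I \<Longrightarrow> closed (K l)" "0 \<le> C" "0 \<le> M"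
    and bound: "\<And>l y w. l \<in> I \<Longrightarrow> y \<in> K l \<Longrightarrow> norm (y - xb) \<le> d \<Longrightarrow>
      w \<in> regular_normal_cone (K l) y \<Longrightarrow> inner w (y - xb) \<le> M * norm w * (norm (y - xb))\<^sup>2"
    and qualification: "\<And>y w. \<forall>l\<in>I. y l \<in> K l \<and> norm (y l - xb) \<le> \<delta> \<and> w l \<in> regular_normal_cone (K l) (y l)
      \<Longrightarrow> (\<Sum>l\<in>I. norm (w l)) \<le> C * norm (\<Sum>l\<in>I. w l)"
    and "norm (x - xb) < min d \<delta>" "u \<in> regular_normal_cone (\<Inter>l\<in>I. K l) x"
  shows "inner u (x - xb) \<le> 2 * C * M * norm u * (norm (x - xb))\<^sup>2"
proof (rule regular_normal_bound_homogeneous[OF _ \<open>u \<in> regular_normal_cone (\<Inter>l\<in>I. K l) x\<close>])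
  fix v assume v: "v \<in> regular_normal_cone (\<Inter>l\<in>I. K l) x" "norm v = 1"
  show "inner v (x - xb) \<le> 2 * C * M * (norm (x - xb))\<^sup>2"
  proof (rule field_le_epsilon)
    fix e :: real assume "e > 0"
    define a where "a = norm (x - xb)"
    define E where "E = a + 2 * C + 2 * C * M * (2 * a + 1)"
    have "E \<ge> 0"
      using \<open>0 \<le> C\<close> \<open>0 \<le> M\<close> by (simp add: E_def a_def)
    define \<theta> where "\<theta> = min (min 1 (min d \<delta> - a)) (e / (E + 1))"
    have \<theta>: "0 < \<theta>" "\<theta> \<le> 1" "\<theta> \<le> min d \<delta> - a"
      using \<open>e > 0\<close> \<open>E \<ge> 0\<close> \<open>norm (x - xb) < min d \<delta>\<close> by (auto simp: \<theta>_def a_def)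
    obtain y w where "\<And>l. l \<in> I \<Longrightarrow> y l \<in> K l" and y_near: "\<And>l. l \<in> I \<Longrightarrow> norm (y l - x) \<le> \<theta>"
      and "\<And>l. l \<in> I \<Longrightarrow> w l \<in> regular_normal_cone (K l) (y l)" and "norm (v - (\<Sum>l\<in>I. w l)) \<le> \<theta>"
      using regular_normal_cone_Inter_fuzzy[OF assms(1,2) v \<theta>(1)] by blast
    moreover have "norm (y l - xb) \<le> min d \<delta>" if "l \<in> I" for l
      using norm_triangle_ineq[of "y l - x" "x - xb"] y_near[OF that] \<theta>(3)
      unfolding a_def by (simp add: le_diff_eq)
    ultimately have "inner v (x - xb) \<le> 2 * C * M * a\<^sup>2 + \<theta> * E"
      unfolding a_def E_def using assms(1,3,4) v(2) \<theta>(1,2)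
      by (intro inner_bound_of_approximate_normal_sum[where y = y and w = w])
        (auto intro!: qualification bound)
    also have "\<theta> * E \<le> e / (E + 1) * E"
      using \<open>E \<ge> 0\<close> by (intro mult_right_mono) (auto simp: \<theta>_def)
    also have "\<dots> \<le> e"
      using \<open>E \<ge> 0\<close> \<open>e > 0\<close> by (simp add: field_simps)
    finally show "inner v (x - xb) \<le> 2 * C * M * (norm (x - xb))\<^sup>2 + e"
      by (simp add: a_def)
  qed
qed

theorem proposition4p4:
  fixes K :: "nat \<Rightarrow> 'a::euclidean_space set" and m :: nat and xb :: 'a
  assumes "\<And>l. l \<in> {1..m} \<Longrightarrow> closed (K l)"
    and "xb \<in> (\<Inter>l\<in>{1..m}. K l)"
    and "\<And>l. l \<in> {1..m} \<Longrightarrow> SOSH (K l) xb"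
    and "linearly_regular_intersection m K xb"
  shows "SOSH (\<Inter>l\<in>{1..m}. K l) xb"
proof -
  obtain d M where "d > 0" "M > 0" and bound: "\<And>l y w. l \<in> {1..m} \<Longrightarrow> y \<in> K l \<Longrightarrow>
      norm (y - xb) \<le> d \<Longrightarrow> w \<in> regular_normal_cone (K l) y \<Longrightarrow>
      inner w (y - xb) \<le> M * norm w * (norm (y - xb))\<^sup>2"
    using SOSH_family_regular_normal_bound[where I = "{1..m}" and K = K, OF _ assms(3)] by auto
  obtain \<delta> C where "\<delta> > 0" "C > 0" and qualification: "\<And>y w.
      \<forall>l\<in>{1..m}. y l \<in> K l \<and> norm (y l - xb) \<le> \<delta> \<and> w l \<in> regular_normal_cone (K l) (y l)
      \<Longrightarrow> (\<Sum>l=1..m. norm (w l)) \<le> C * norm (\<Sum>l=1..m. w l)"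
    using linearly_regular_intersection_bound[OF assms(4)] by blast
  have "inner w (x - xb) \<le> 2 * C * M * norm w * (norm (x - xb))\<^sup>2"
    if "norm (x - xb) \<le> min d \<delta> / 2" "w \<in> regular_normal_cone (\<Inter>l\<in>{1..m}. K l) x" for x w
    using finite_atLeastAtMost assms(1) _ _ bound qualification _ that(2)
    by (rule Inter_regular_normal_bound) (use \<open>C > 0\<close> \<open>M > 0\<close> \<open>d > 0\<close> \<open>\<delta> > 0\<close> that(1) in auto)
  then show ?thesis
    using \<open>d > 0\<close> \<open>\<delta> > 0\<close> \<open>C > 0\<close> \<open>M > 0\<close>
    by (intro regular_normal_bound_imp_SOSH[of "min d \<delta> / 2" "2 * C * M"]) auto
qed

end
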